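(* Let $p$ be an odd prime, $\xi$ a primitive $p$th root of unity, $0\neq n\in\mathbb Z$. Let $(\mathfrak a,a),(\mathfrak a,b)\in I$. Then $[\mathfrak a,a]=[\mathfrak a,b]$ if and only if $a/b\in N(\mathbb Z[1/n][\xi]^* )$.
   Context: $N(x)=x\overline x$ (bar = complex conjugation). $I$ is the set of pairs $(\mathfrak a,a)$ with $\mathfrak a\subseteq\mathbb Z[1/n][\xi]$ an ideal and $0\neq a\in\mathbb Z[1/n][\xi]$ with $\mathfrak a\overline{\mathfrak a}=(a)$; $[\mathfrak a,a]=[\mathfrak b,b]$ means there exist nonzero $\lambda,\mu\in\mathbb Z[1/n][\xi]$ with $\lambda\mathfrak a=\mu\mathfrak b$ and $\lambda\overline\lambda a=\mu\overline\mu b$. *)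

theory Defs
  imports Complex_Main "HOL-Computational_Algebra.Primes"
begin

definition Zxi :: "int \<Rightarrow> complex \<Rightarrow> complex set" where
  "Zxi n \<xi> = {x. \<exists>(k::nat) (N::nat) (c::nat \<Rightarrow> int).
      x = (\<Sum>i<N. of_int (c i) * \<xi> ^ i) / of_int n ^ k}"

definition is_ideal :: "complex set \<Rightarrow> complex set \<Rightarrow> bool" where
  "is_ideal R A \<longleftrightarrow> A \<subseteq> R \<and> 0 \<in> A \<and> (\<forall>x\<in>A. \<forall>y\<in>A. x + y \<in> A)
     \<and> (\<forall>x\<in>A. - x \<in> A) \<and> (\<forall>r\<in>R. \<forall>x\<in>A. r * x \<in> A)"

definition ideal_prod :: "complex set \<Rightarrow> complex set \<Rightarrow> complex set" where
  "ideal_prod A B = {x. \<exists>(N::nat) f g. (\<forall>i<N. f i \<in> A \<and> g i \<in> B) \<and> x = (\<Sum>i<N. f i * g i)}"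

definition principal :: "complex set \<Rightarrow> complex \<Rightarrow> complex set" where
  "principal R a = {a * r | r. r \<in> R}"

definition in_I :: "complex set \<Rightarrow> complex set \<Rightarrow> complex \<Rightarrow> bool" where
  "in_I R A a \<longleftrightarrow> is_ideal R A \<and> a \<in> R \<and> a \<noteq> 0 \<and>
     ideal_prod A (cnj ` A) = principal R a"

definition I_equiv :: "complex set \<Rightarrow> complex set \<Rightarrow> complex \<Rightarrow> complex set \<Rightarrow> complex \<Rightarrow> bool" where
  "I_equiv R A a B b \<longleftrightarrow> (\<exists>l\<in>R. \<exists>m\<in>R. l \<noteq> 0 \<and> m \<noteq> 0 \<and>
     (\<lambda>x. l * x) ` A = (\<lambda>x. m * x) ` B \<and> l * cnj l * a = m * cnj m * b)"

definition ring_units :: "complex set \<Rightarrow> complex set" where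
  "ring_units R = {u \<in> R. \<exists>v\<in>R. u * v = 1}"

definition norm_units :: "complex set \<Rightarrow> complex set" where
  "norm_units R = {u * cnj u | u. u \<in> ring_units R}"

end

theory Submission
  imports Defs
begin

text \<open>If \<open>l A = m A\<close>, multiplying \<open>A cnj(A) = (a)\<close> by \<open>l\<close> gives \<open>l a \<in> m a R\<close>, so \<open>m\<close>
  divides \<open>l\<close>; by symmetry \<open>m = l s\<close> for a unit \<open>s\<close>, and \<open>l cnj(l) a = m cnj(m) b\<close> becomes
  \<open>a = s cnj(s) b\<close>. Conversely a unit \<open>u\<close> fixes the ideal \<open>A\<close>, so \<open>(1, u)\<close> witnesses the
  equivalence when \<open>a/b = u cnj(u)\<close>.\<close>

lemma one_in_Zxi: "1 \<in> Zxi n \<xi>"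
  unfolding Zxi_def by (intro CollectI exI[of _ 0] exI[of _ 1] exI[of _ "\<lambda>_. 1"]) simp

lemma mult_image_ideal_prod:
  assumes "(\<lambda>x. l * x) ` A \<subseteq> (\<lambda>x. m * x) ` B" and "x \<in> ideal_prod A C"
  shows "l * x \<in> (\<lambda>x. m * x) ` ideal_prod B C"
proof -
  obtain N :: nat and f g where fg: "\<forall>i<N. f i \<in> A \<and> g i \<in> C" and x: "x = (\<Sum>i<N. f i * g i)"
    using assms(2) unfolding ideal_prod_def by blast
  have "\<forall>i\<in>{..<N}. \<exists>h. h \<in> B \<and> l * f i = m * h"
    using fg assms(1) by blast
  from bchoice[OF this] obtain h where h: "\<forall>i<N. h i \<in> B \<and> l * f i = m * h i"
    by auto
  have "l * x = (\<Sum>i<N. (l * f i) * g i)"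
    by (simp add: x sum_distrib_left mult.assoc)
  also have "\<dots> = m * (\<Sum>i<N. h i * g i)"
    using h by (simp add: sum_distrib_left mult.assoc)
  finally show ?thesis
    using h fg unfolding ideal_prod_def by blast
qed

lemma in_I_mult_image_subset_factor:
  assumes I: "in_I R A a" and one: "1 \<in> R"
    and sub: "(\<lambda>x. l * x) ` A \<subseteq> (\<lambda>x. m * x) ` A"
  shows "\<exists>r\<in>R. l = m * r"
proof -
  have a0: "a \<noteq> 0" and AA: "ideal_prod A (cnj ` A) = principal R a"
    using I unfolding in_I_def by simp_all
  have "a \<in> ideal_prod A (cnj ` A)"
    using one AA unfolding principal_def by force
  then obtain y where "y \<in> principal R a" and "l * a = m * y"
    using mult_image_ideal_prod[OF sub] AA by blast
  then obtain r where "r \<in> R" and "l * a = (m * r) * a"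
    unfolding principal_def by (auto simp: mult_ac)
  then show ?thesis
    using a0 by auto
qed

lemma mutual_factors_unit:
  assumes "l \<noteq> 0" and "r \<in> R" and "s \<in> R" and "l = m * r" and "m = l * s"
  shows "s \<in> ring_units R"
proof -
  have "l * (s * r) = l * 1"
    using assms(4,5) by (simp add: mult.assoc)
  then have "s * r = 1"
    using assms(1) by simp
  then show ?thesis
    using assms(2,3) unfolding ring_units_def by blast
qed

lemma mult_image_ideal_unit:
  assumes "is_ideal R A" and "u \<in> ring_units R"
  shows "(\<lambda>x. u * x) ` A = A"
proof
  obtain v where uv: "u \<in> R" "v \<in> R" "u * v = 1"
    using assms(2) unfolding ring_units_def by blast
  show "(\<lambda>x. u * x) ` A \<subseteq> A"
    using assms(1) uv(1) unfolding is_ideal_def by blast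
  show "A \<subseteq> (\<lambda>x. u * x) ` A"
  proof
    fix y assume "y \<in> A"
    then have "v * y \<in> A" and "y = u * (v * y)"
      using assms(1) uv unfolding is_ideal_def by (auto simp: mult.assoc[symmetric])
    then show "y \<in> (\<lambda>x. u * x) ` A"
      by blast
  qed
qed

theorem I_equiv_same_ideal_iff_norm_units:
  assumes one: "1 \<in> R" and Ia: "in_I R A a" and Ib: "in_I R A b"
  shows "I_equiv R A a A b \<longleftrightarrow> a / b \<in> norm_units R"
proof
  have b0: "b \<noteq> 0"
    using Ib unfolding in_I_def by simp
  show "a / b \<in> norm_units R" if "I_equiv R A a A b"
  proof -
    obtain l m where lm: "l \<in> R" "m \<in> R" "l \<noteq> 0" "m \<noteq> 0"
      and A: "(\<lambda>x. l * x) ` A = (\<lambda>x. m * x) ` A" and ab: "l * cnj l * a = m * cnj m * b"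
      using \<open>I_equiv R A a A b\<close> unfolding I_equiv_def by blast
    obtain r where "r \<in> R" "l = m * r"
      using in_I_mult_image_subset_factor[OF Ia one] A by blast
    moreover obtain s where "s \<in> R" "m = l * s"
      using in_I_mult_image_subset_factor[OF Ia one] A by blast
    ultimately have s: "s \<in> ring_units R" "m = l * s"
      using mutual_factors_unit[OF lm(3)] by blast+
    have "l * cnj l * a = l * cnj l * (s * cnj s * b)"
      using ab s(2) by (simp add: mult_ac)
    then have "a / b = s * cnj s"
      using lm(3) b0 by simp
    then show ?thesis
      using s(1) unfolding norm_units_def by blast
  qed
  show "I_equiv R A a A b" if "a / b \<in> norm_units R"
  proof -
    obtain u where u: "u \<in> ring_units R" "a / b = u * cnj u"
      using \<open>a / b \<in> norm_units R\<close> unfolding norm_units_def by blast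
    then have "u \<in> R" "u \<noteq> 0"
      unfolding ring_units_def by auto
    moreover have "(\<lambda>x. 1 * x) ` A = (\<lambda>x. u * x) ` A"
      using mult_image_ideal_unit[OF _ u(1)] Ia unfolding in_I_def by simp
    moreover have "1 * cnj 1 * a = u * cnj u * b"
      using u(2) b0 by (simp add: field_simps)
    ultimately show ?thesis
      unfolding I_equiv_def using one by (intro bexI[of _ 1] bexI[of _ u]) auto
  qed
qed

theorem lemma3p9:
  fixes p :: nat and \<xi> :: complex and n :: int and A :: "complex set" and a b :: complex
  assumes "prime p" and "odd p"
    and "\<xi> ^ p = 1" and "\<forall>k. 0 < k \<and> k < p \<longrightarrow> \<xi> ^ k \<noteq> 1"
    and "n \<noteq> 0"
    and "in_I (Zxi n \<xi>) A a" and "in_I (Zxi n \<xi>) A b"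
  shows "I_equiv (Zxi n \<xi>) A a A b \<longleftrightarrow> a / b \<in> norm_units (Zxi n \<xi>)"
  using I_equiv_same_ideal_iff_norm_units[OF one_in_Zxi assms(6,7)] .

end
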